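(* Let $N\ge1$, $G$ a positive integer, $D>0$, and let $h_1\le\cdots\le h_N$ be positive reals. (a) If $k\in\{1,\dots,N\}$ satisfies $(N-k)D\le h_k\le(N+1-k)D$, $x_k^*=h_k-(N-k)D$ and $S=(N-k)D+x_k^*$, then for every $n\in\{1,\dots,k-1\}$, $$\frac{2\sqrt{GS^3}}{k-n}\le\frac{D\sqrt{G}}{\frac{1}{\sqrt{S}}-\frac{1}{\sqrt{(N-n)D+x_k^*}}}.$$ (b) If $m\in\{1,\dots,N-1\}$ satisfies $h_m<(N-m)D<h_{m+1}$ and $T=(N-m)D$, then for every $n\in\{1,\dots,m\}$, $$\frac{2\sqrt{GT^3}}{m-n+1}\le\frac{D\sqrt{G}}{\frac{1}{\sqrt{T}}-\frac{1}{\sqrt{(N-n+1)D}}}.$$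
   Context: In the paper, $h_n=\sqrt[3]{\rho_n^2/(4GE_n^2)}$ for clients with valuations $\rho_n>0$ and computation cost coefficients $E_n>0$ sorted by $\rho_n/E_n$; the left-hand sides are denoted $B_n$ (resp. $B'_n$) and the right-hand sides $O_n$ (resp. $O'_n$). *)

theory Defs
  imports Complex_Main
begin

end

theory Submission
  imports Defs
begin

text \<open>Put \<open>a = sqrt S\<close> and \<open>b = sqrt (S + j * D)\<close>, so that \<open>j * D = b\<^sup>2 - a\<^sup>2\<close>.
  Then the right-hand side equals \<open>sqrt G * a * b * (a + b) / j\<close> and the left-hand side
  \<open>2 * sqrt G * a\<^sup>3 / j\<close>, so everything reduces to \<open>2 * a\<^sup>2 \<le> b * (a + b)\<close> for \<open>a < b\<close>.
  In both parts of the theorem the gap is a positive integer multiple of \<open>D\<close>; only the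
  positivity of \<open>S\<close> resp. \<open>T\<close> is used, not the ordering of the \<open>h i\<close>.\<close>

lemma two_cube_div_le_inverse_recip_diff:
  fixes a b :: real
  assumes "0 < a" and "a < b"
  shows "2 * a ^ 3 / (b\<^sup>2 - a\<^sup>2) \<le> 1 / (1 / a - 1 / b)"
proof -
  have factor: "b\<^sup>2 - a\<^sup>2 = (b - a) * (a + b)"
    by (simp add: power2_eq_square algebra_simps)
  have "b\<^sup>2 - a\<^sup>2 > 0"
    using assms unfolding factor by simp
  have "1 / (1 / a - 1 / b) = a * b / (b - a)"
    using assms by (simp add: field_simps)
  also have "\<dots> = a * b * (a + b) / (b\<^sup>2 - a\<^sup>2)"
    using assms unfolding factor by simp
  finally have "1 / (1 / a - 1 / b) = a * b * (a + b) / (b\<^sup>2 - a\<^sup>2)" .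
  moreover have "2 * a ^ 3 \<le> a * b * (a + b)"
  proof -
    have "a * a \<le> a * b" and "a * a \<le> b * b"
      using assms by (simp_all add: mult_mono)
    then have "2 * (a * a) \<le> b * (a + b)"
      by (simp add: algebra_simps)
    then have "a * (2 * (a * a)) \<le> a * (b * (a + b))"
      using assms by (simp add: mult_left_mono)
    then show ?thesis
      by (simp add: power3_eq_cube algebra_simps)
  qed
  ultimately show ?thesis
    using \<open>b\<^sup>2 - a\<^sup>2 > 0\<close> by (simp add: divide_right_mono)
qed

lemma sqrt_cube_div_le_recip_sqrt_diff:
  fixes S G D j :: real
  assumes "S > 0" and "G > 0" and "D > 0" and "j > 0"
  shows "2 * sqrt (G * S ^ 3) / j \<le> D * sqrt G / (1 / sqrt S - 1 / sqrt (S + j * D))"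
proof -
  define a b where "a = sqrt S" and "b = sqrt (S + j * D)"
  have "0 < a" "a < b"
    using assms by (simp_all add: a_def b_def)
  have gap: "b\<^sup>2 - a\<^sup>2 = j * D"
    using assms by (simp add: a_def b_def)
  have "2 * sqrt (G * S ^ 3) / j = D * sqrt G * (2 * a ^ 3 / (b\<^sup>2 - a\<^sup>2))"
    using assms unfolding gap by (simp add: a_def real_sqrt_mult real_sqrt_power field_simps)
  also have "\<dots> \<le> D * sqrt G * (1 / (1 / a - 1 / b))"
    by (rule mult_left_mono[OF two_cube_div_le_inverse_recip_diff[OF \<open>0 < a\<close> \<open>a < b\<close>]])
      (use assms in simp)
  finally show ?thesis
    by (simp add: a_def b_def)
qed

theorem lemma3:
  fixes N G :: nat and D :: real and h :: "nat \<Rightarrow> real"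
  assumes "N \<ge> 1" and "G > 0" and "D > 0"
    and "\<forall>i\<in>{1..N}. h i > 0"
    and "\<forall>i j. 1 \<le> i \<longrightarrow> i \<le> j \<longrightarrow> j \<le> N \<longrightarrow> h i \<le> h j"
  shows "(\<forall>k\<in>{1..N}. \<forall>x S.
            real (N - k) * D \<le> h k \<and> h k \<le> real (N + 1 - k) * D
            \<and> x = h k - real (N - k) * D \<and> S = real (N - k) * D + x
          \<longrightarrow> (\<forall>n\<in>{1..k - 1}.
                2 * sqrt (real G * S ^ 3) / real (k - n)
                \<le> D * sqrt (real G) / (1 / sqrt S - 1 / sqrt (real (N - n) * D + x))))
       \<and> (\<forall>m\<in>{1..N - 1}. \<forall>T.
            h m < real (N - m) * D \<and> real (N - m) * D < h (m + 1) \<and> T = real (N - m) * D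
          \<longrightarrow> (\<forall>n\<in>{1..m}.
                2 * sqrt (real G * T ^ 3) / real (m - n + 1)
                \<le> D * sqrt (real G) / (1 / sqrt T - 1 / sqrt (real (N - n + 1) * D))))"
proof (intro conjI ballI allI impI)
  fix k x S n
  assume k: "k \<in> {1..N}" and n: "n \<in> {1..k - 1}"
    and hyp: "real (N - k) * D \<le> h k \<and> h k \<le> real (N + 1 - k) * D
            \<and> x = h k - real (N - k) * D \<and> S = real (N - k) * D + x"
  have "S > 0"
    using hyp k assms(4) by auto
  have gap: "real (N - n) * D + x = S + real (k - n) * D"
  proof -
    have "n \<le> k" "k \<le> N"
      using n k by auto
    then show ?thesis
      using hyp by (simp add: of_nat_diff algebra_simps)
  qed
  show "2 * sqrt (real G * S ^ 3) / real (k - n)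
      \<le> D * sqrt (real G) / (1 / sqrt S - 1 / sqrt (real (N - n) * D + x))"
    unfolding gap by (rule sqrt_cube_div_le_recip_sqrt_diff) (use \<open>S > 0\<close> n assms(2,3) in auto)
next
  fix m T n
  assume m: "m \<in> {1..N - 1}" and n: "n \<in> {1..m}"
    and hyp: "h m < real (N - m) * D \<and> real (N - m) * D < h (m + 1) \<and> T = real (N - m) * D"
  have "T > 0"
    using hyp m assms(3) by auto
  have gap: "real (N - n + 1) * D = T + real (m - n + 1) * D"
  proof -
    have "n \<le> m" "m \<le> N"
      using n m by auto
    then show ?thesis
      using hyp by (simp add: of_nat_diff algebra_simps)
  qed
  show "2 * sqrt (real G * T ^ 3) / real (m - n + 1)
      \<le> D * sqrt (real G) / (1 / sqrt T - 1 / sqrt (real (N - n + 1) * D))"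
    unfolding gap by (rule sqrt_cube_div_le_recip_sqrt_diff) (use \<open>T > 0\<close> assms(2,3) in auto)
qed

end
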